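(* Let $(X,\mathcal{A},\mu,T)$ be a measure-preserving system ($\mu$ a probability measure). Then: (i) $T$ is mixing if and only if for all $A,B\in\mathcal{A}$ with $\mu(B)>0$, $\limsup_{n\to\infty}\mu(A\cap T^{-n}(B))/\mu(B)\le\mu(A)$; (ii) $T$ is weakly mixing if and only if for all $A,B\in\mathcal{A}$ with $\mu(B)>0$ there is a set $\mathcal{N}=\mathcal{N}(A,B)\subset\mathbb{N}$ of zero asymptotic density such that $\limsup_{n\to\infty,\,n\notin\mathcal{N}}\mu(A\cap T^{-n}(B))/\mu(B)\le\mu(A)$; (iii) $T$ is ergodic if and only if for all $A,B\in\mathcal{A}$ with $\mu(B)>0$ there is $\mathcal{N}=\mathcal{N}(A,B)\subset\mathbb{N}$ with $\mathbb{N}\setminus\mathcal{N}$ infinite such that $\limsup_{n\to\infty,\,n\notin\mathcal{N}}\mu(A\cap T^{-n}(B))/\mu(B)\le\mu(A)$; equivalently, if and only if for all $A,B\in\mathcal{A}$ with $\mu(B)>0$, $\liminf_{n\to\infty}\mu(A\cap T^{-n}(B))/\mu(B)\le\mu(A)$. *)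

theory Defs
  imports "HOL-Probability.Probability"
begin

definition preimg_iter :: "'a measure \<Rightarrow> ('a \<Rightarrow> 'a) \<Rightarrow> nat \<Rightarrow> 'a set \<Rightarrow> 'a set" where
  "preimg_iter M T n B = (T ^^ n) -` B \<inter> space M"

definition mps :: "'a measure \<Rightarrow> ('a \<Rightarrow> 'a) \<Rightarrow> bool" where
  "mps M T \<longleftrightarrow> prob_space M \<and> T \<in> measurable M M \<and>
     (\<forall>A\<in>sets M. measure M (T -` A \<inter> space M) = measure M A)"

definition ergodic :: "'a measure \<Rightarrow> ('a \<Rightarrow> 'a) \<Rightarrow> bool" where
  "ergodic M T \<longleftrightarrow> (\<forall>A\<in>sets M. T -` A \<inter> space M = A \<longrightarrow> measure M A = 0 \<or> measure M A = 1)"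

definition mixing :: "'a measure \<Rightarrow> ('a \<Rightarrow> 'a) \<Rightarrow> bool" where
  "mixing M T \<longleftrightarrow> (\<forall>A\<in>sets M. \<forall>B\<in>sets M.
     (\<lambda>n. measure M (A \<inter> preimg_iter M T n B)) \<longlonglongrightarrow> measure M A * measure M B)"

definition weakly_mixing :: "'a measure \<Rightarrow> ('a \<Rightarrow> 'a) \<Rightarrow> bool" where
  "weakly_mixing M T \<longleftrightarrow> (\<forall>A\<in>sets M. \<forall>B\<in>sets M.
     (\<lambda>N. (\<Sum>n<N. \<bar>measure M (A \<inter> preimg_iter M T n B) - measure M A * measure M B\<bar>) / real N)
       \<longlonglongrightarrow> 0)"

definition zero_density :: "nat set \<Rightarrow> bool" where
  "zero_density S \<longleftrightarrow> (\<lambda>n. real (card (S \<inter> {..<n})) / real n) \<longlonglongrightarrow> 0"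

definition ratio_seq :: "'a measure \<Rightarrow> ('a \<Rightarrow> 'a) \<Rightarrow> 'a set \<Rightarrow> 'a set \<Rightarrow> nat \<Rightarrow> ereal" where
  "ratio_seq M T A B n = ereal (measure M (A \<inter> preimg_iter M T n B) / measure M B)"

end

theory Submission
  imports Defs
begin

text \<open>
  Write \<open>r\<^sub>n(A, B) = \<mu>(A \<inter> T\<^sup>-\<^sup>n B) / \<mu>(B)\<close>. Since \<open>r\<^sub>n(A, B) + r\<^sub>n(X - A, B) = 1 = \<mu>(A) + \<mu>(X - A)\<close>,
  upper bounds for the limsup along a filter for both \<open>A\<close> and its complement force
  \<open>r\<^sub>n(A, B) \<rightarrow> \<mu>(A)\<close> along that filter. This gives (i) directly, and (ii) together with the
  Koopman-von Neumann lemma: a bounded nonnegative sequence has Cesaro means tending to \<open>0\<close>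
  iff it tends to \<open>0\<close> off a set of zero density.

  For (iii), a strictly invariant set \<open>A\<close> has \<open>r\<^sub>n(A, A) = 1\<close>, which rules out
  \<open>0 < \<mu>(A) < 1\<close>. Conversely, if \<open>r\<^sub>n(A, B) > c > \<mu>(A)\<close> for all large \<open>n\<close>, then after
  replacing \<open>B\<close> by a preimage the complement \<open>A'\<close> of \<open>A\<close> satisfies
  \<open>\<mu>(A' \<inter> T\<^sup>-\<^sup>k B) < (1 - c) \<mu>(B)\<close> for all \<open>k\<close>. By Fatou, the lower frequency \<open>f\<^sub>B\<close> of visits
  to \<open>B\<close> then has \<open>\<integral>\<^sub>A' f\<^sub>B \<le> (1 - c) \<mu>(B)\<close>. But \<open>f\<^sub>B\<close> is invariant, hence a.e. at least
  its mean by ergodicity, and a stopping-time tiling of orbits shows that this mean is at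
  least \<open>\<mu>(B)\<close>; so \<open>\<integral>\<^sub>A' f\<^sub>B \<ge> \<mu>(A') \<mu>(B) > (1 - c) \<mu>(B)\<close>, a contradiction.
\<close>

section \<open>Upper limits along filters\<close>

lemma Limsup_ereal_le_iff:
  "Limsup F (\<lambda>n. ereal (f n)) \<le> ereal c \<longleftrightarrow> (\<forall>\<epsilon>>0. eventually (\<lambda>n. f n < c + \<epsilon>) F)"
proof
  assume le: "Limsup F (\<lambda>n. ereal (f n)) \<le> ereal c"
  show "\<forall>\<epsilon>>0. eventually (\<lambda>n. f n < c + \<epsilon>) F"
  proof (intro allI impI)
    fix \<epsilon> :: real assume "\<epsilon> > 0"
    with le have "Limsup F (\<lambda>n. ereal (f n)) < ereal (c + \<epsilon>)" by (simp add: le_less_trans)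
    from Limsup_lessD[OF this] show "eventually (\<lambda>n. f n < c + \<epsilon>) F" by simp
  qed
next
  assume ev: "\<forall>\<epsilon>>0. eventually (\<lambda>n. f n < c + \<epsilon>) F"
  show "Limsup F (\<lambda>n. ereal (f n)) \<le> ereal c"
    unfolding Limsup_le_iff
  proof (intro allI impI)
    fix y :: ereal assume y: "y > ereal c"
    show "eventually (\<lambda>n. y > ereal (f n)) F"
    proof (cases y)
      case (real r)
      with y have "r - c > 0" by simp
      with ev have "eventually (\<lambda>n. f n < c + (r - c)) F" by blast
      then show ?thesis by eventually_elim (simp add: real)
    qed (use y in simp_all)
  qed
qed

lemma Limsup_mono_filter: "F \<le> G \<Longrightarrow> Limsup F f \<le> Limsup G f"
  unfolding Limsup_def by (rule INF_superset_mono) (auto simp: filter_leD)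

lemma Limsup_le_of_tendsto:
  "(f \<longlongrightarrow> c) F \<Longrightarrow> Limsup F (\<lambda>n. ereal (f n)) \<le> ereal c"
  unfolding Limsup_ereal_le_iff
  by (auto dest!: order_tendstoD(2)[where a = "c + _"])

lemma tendsto_of_complementary_Limsup:
  fixes f g :: "'b \<Rightarrow> real"
  assumes "Limsup F (\<lambda>n. ereal (f n)) \<le> ereal c" "Limsup F (\<lambda>n. ereal (g n)) \<le> ereal d"
    and "\<And>n. f n + g n = c + d"
  shows "(f \<longlongrightarrow> c) F"
proof (rule tendstoI)
  fix \<epsilon> :: real assume "\<epsilon> > 0"
  with assms(1,2) have "eventually (\<lambda>n. f n < c + \<epsilon>) F" "eventually (\<lambda>n. g n < d + \<epsilon>) F"
    by (simp_all add: Limsup_ereal_le_iff)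
  then show "eventually (\<lambda>n. dist (f n) c < \<epsilon>) F"
  proof eventually_elim
    case (elim n)
    with assms(3)[of n] show ?case by (simp add: dist_real_def abs_less_iff)
  qed
qed

lemma sequentially_inf_principal_ne_bot:
  assumes "infinite S" shows "sequentially \<sqinter> principal S \<noteq> bot"
proof
  assume "sequentially \<sqinter> principal S = bot"
  then obtain K where "\<forall>n\<ge>K. n \<notin> S"
    unfolding trivial_limit_def eventually_inf_principal eventually_sequentially by auto
  then have "S \<subseteq> {..<K}" by (auto simp: not_le[symmetric])
  with assms show False using finite_subset by blast
qed

lemma exists_Limsup_along_infinite_le_liminf:
  fixes f :: "nat \<Rightarrow> 'b :: {complete_linorder, linorder_topology}"
  shows "\<exists>N. infinite (- N) \<and> Limsup (sequentially \<sqinter> principal (- N)) f \<le> liminf f"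
proof -
  obtain \<sigma> :: "nat \<Rightarrow> nat" where sm: "strict_mono \<sigma>" and lim: "(f \<circ> \<sigma>) \<longlonglongrightarrow> liminf f"
    using liminf_subseq_lim by blast
  have "Limsup (sequentially \<sqinter> principal (range \<sigma>)) f \<le> liminf f"
    unfolding Limsup_le_iff
  proof (intro allI impI)
    fix y assume "y > liminf f"
    from order_tendstoD(2)[OF lim this] obtain K where K: "\<And>k. k \<ge> K \<Longrightarrow> f (\<sigma> k) < y"
      unfolding eventually_sequentially by auto
    have "f n < y" if "\<sigma> K \<le> n" "n \<in> range \<sigma>" for n
      using that K strict_mono_less_eq[OF sm] by auto
    then show "eventually (\<lambda>n. y > f n) (sequentially \<sqinter> principal (range \<sigma>))"
      unfolding eventually_inf_principal eventually_sequentially by blast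
  qed
  moreover have "infinite (range \<sigma>)"
    using range_inj_infinite[OF strict_mono_imp_inj_on[OF sm]] .
  ultimately show ?thesis by (intro exI[of _ "- range \<sigma>"]) simp
qed

section \<open>Sets of zero density\<close>

lemma zero_density_Un:
  assumes "zero_density N1" "zero_density N2"
  shows "zero_density (N1 \<union> N2)"
  unfolding zero_density_def
proof (rule tendsto_sandwich[OF _ _ tendsto_const])
  show "(\<lambda>n. real (card (N1 \<inter> {..<n})) / real n + real (card (N2 \<inter> {..<n})) / real n) \<longlonglongrightarrow> 0"
    using tendsto_add[OF assms[unfolded zero_density_def]] by simp
  have "real (card ((N1 \<union> N2) \<inter> {..<n})) \<le> real (card (N1 \<inter> {..<n})) + real (card (N2 \<inter> {..<n}))" for n
    by (metis Int_Un_distrib2 card_Un_le of_nat_add of_nat_mono)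
  then show "\<forall>\<^sub>F n in sequentially. real (card ((N1 \<union> N2) \<inter> {..<n})) / real n
      \<le> real (card (N1 \<inter> {..<n})) / real n + real (card (N2 \<inter> {..<n})) / real n"
    by (intro always_eventually allI) (simp add: add_divide_distrib[symmetric] divide_right_mono)
qed simp

lemma cesaro_mean_tendsto_zero:
  fixes b :: "nat \<Rightarrow> real"
  assumes nonneg: "\<And>n. 0 \<le> b n" and lim: "b \<longlonglongrightarrow> 0"
  shows "(\<lambda>m. (\<Sum>n<m. b n) / real m) \<longlonglongrightarrow> 0"
proof (rule tendstoI)
  fix \<epsilon> :: real assume \<epsilon>: "\<epsilon> > 0"
  from order_tendstoD(2)[OF lim, of "\<epsilon>/2"] \<epsilon> obtain K where K: "\<And>n. n \<ge> K \<Longrightarrow> b n < \<epsilon>/2"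
    unfolding eventually_sequentially by auto
  define S where "S = (\<Sum>n<K. b n)"
  obtain m0 :: nat where m0: "2 * S / \<epsilon> < real m0" using reals_Archimedean2 by blast
  have "(\<Sum>n<m. b n) / real m < \<epsilon>" if m: "m \<ge> max m0 1" for m
  proof -
    have "(\<Sum>n<m. b n) \<le> (\<Sum>n<m. (if n < K then b n else 0) + \<epsilon>/2)"
      using K nonneg \<epsilon> by (intro sum_mono) (auto simp: less_imp_le)
    also have "\<dots> \<le> S + real m * \<epsilon>/2"
      using nonneg by (auto simp: S_def sum.distrib sum.If_cases intro!: sum_mono2)
    also have "S < real m * \<epsilon>/2"
    proof -
      have "2 * S / \<epsilon> < real m" using m0 m by (meson less_le_trans max.boundedE of_nat_le_iff)
      with \<epsilon> show ?thesis by (simp add: field_simps)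
    qed
    finally show ?thesis using m by (simp add: divide_less_eq mult.commute)
  qed
  moreover have "0 \<le> (\<Sum>n<m. b n)" for m using nonneg by (simp add: sum_nonneg)
  ultimately have "dist ((\<Sum>n<m. b n) / real m) 0 < \<epsilon>" if "m \<ge> max m0 1" for m
    using that by (simp add: dist_real_def)
  then show "\<forall>\<^sub>F m in sequentially. dist ((\<Sum>n<m. b n) / real m) 0 < \<epsilon>"
    unfolding eventually_sequentially by blast
qed

lemma cesaro_tendsto_zero_of_zero_density:
  fixes a :: "nat \<Rightarrow> real"
  assumes a: "\<And>n. 0 \<le> a n" "\<And>n. a n \<le> 1" and N: "zero_density N"
    and lim: "(a \<longlongrightarrow> 0) (sequentially \<sqinter> principal (- N))"
  shows "(\<lambda>m. (\<Sum>n<m. a n) / real m) \<longlonglongrightarrow> 0"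
proof (rule tendsto_sandwich[OF _ _ tendsto_const])
  define b where "b n = (if n \<in> N then 0 else a n)" for n
  have b_lim: "b \<longlonglongrightarrow> 0"
  proof (rule tendstoI)
    fix \<epsilon> :: real assume "\<epsilon> > 0"
    from tendstoD[OF lim this] have "\<forall>\<^sub>F n in sequentially. n \<in> - N \<longrightarrow> dist (a n) 0 < \<epsilon>"
      by (simp add: eventually_inf_principal)
    then show "\<forall>\<^sub>F n in sequentially. dist (b n) 0 < \<epsilon>"
      unfolding b_def using \<open>\<epsilon> > 0\<close> by (auto elim!: eventually_mono)
  qed
  have "0 \<le> b n" for n using a(1) by (simp add: b_def)
  from tendsto_add[OF N[unfolded zero_density_def] cesaro_mean_tendsto_zero[OF this b_lim]]
  have "(\<lambda>m. real (card (N \<inter> {..<m})) / real m + (\<Sum>n<m. b n) / real m) \<longlonglongrightarrow> 0"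
    by simp
  moreover have "(\<Sum>n<m. a n) \<le> real (card (N \<inter> {..<m})) + (\<Sum>n<m. b n)" for m
  proof -
    have "(\<Sum>n<m. a n) \<le> (\<Sum>n<m. of_bool (n \<in> N) + b n)"
      using a by (intro sum_mono) (auto simp: b_def)
    also have "\<dots> = real (card (N \<inter> {..<m})) + (\<Sum>n<m. b n)"
      by (simp add: sum.distrib Int_commute)
    finally show ?thesis .
  qed
  ultimately show "(\<lambda>m. real (card (N \<inter> {..<m})) / real m + (\<Sum>n<m. b n) / real m) \<longlonglongrightarrow> 0"
    "\<forall>\<^sub>F m in sequentially. (\<Sum>n<m. a n) / real m
        \<le> real (card (N \<inter> {..<m})) / real m + (\<Sum>n<m. b n) / real m"
    by (auto simp: add_divide_distrib[symmetric] divide_right_mono)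
qed (use a in \<open>simp add: sum_nonneg\<close>)

lemma exists_slower_null_seq:
  fixes C :: "nat \<Rightarrow> real"
  assumes nonneg: "\<And>m. 0 \<le> C m" and lim: "C \<longlonglongrightarrow> 0"
  obtains \<delta> where "antimono \<delta>" "\<And>m. 0 < \<delta> m" "\<delta> \<longlonglongrightarrow> 0" "(\<lambda>m. C m / \<delta> m) \<longlonglongrightarrow> 0"
proof -
  define D where "D m = (SUP k\<in>{m..}. C k)" for m
  have bdd: "bdd_above (C ` S)" for S
    using Bseq_bdd_above[OF convergent_imp_Bseq[OF convergentI[OF lim]]] by (rule bdd_above_mono) auto
  have CD: "C m \<le> D m" for m unfolding D_def by (rule cSUP_upper) (auto intro: bdd)
  have D0: "0 \<le> D m" for m using CD[of m] nonneg[of m] by linarith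
  have "antimono D" unfolding D_def by (intro antimonoI cSUP_subset_mono) (auto intro: bdd)
  have "D \<longlonglongrightarrow> 0"
  proof (rule tendstoI)
    fix \<epsilon> :: real assume \<epsilon>: "\<epsilon> > 0"
    from order_tendstoD(2)[OF lim, of "\<epsilon>/2"] \<epsilon> obtain K where K: "\<And>k. k \<ge> K \<Longrightarrow> C k < \<epsilon>/2"
      unfolding eventually_sequentially by auto
    have D_le: "D m \<le> \<epsilon>/2" if "m \<ge> K" for m
      unfolding D_def using that K by (intro cSUP_least) (auto intro: less_imp_le)
    have "dist (D m) 0 < \<epsilon>" if "m \<ge> K" for m
      using D_le[OF that] D0[of m] \<epsilon> by (simp add: dist_real_def)
    then show "\<forall>\<^sub>F m in sequentially. dist (D m) 0 < \<epsilon>"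
      unfolding eventually_sequentially by blast
  qed
  \<comment> \<open>the square root gives \<open>C m / \<delta> m \<le> sqrt (D m)\<close>; the second summand keeps \<open>\<delta>\<close> positive\<close>
  define \<delta> where "\<delta> m = sqrt (D m) + 1 / (real m + 1)" for m
  have \<delta>_pos: "0 < \<delta> m" for m unfolding \<delta>_def using D0[of m] by (simp add: add_nonneg_pos)
  have "antimono \<delta>"
    using \<open>antimono D\<close> unfolding \<delta>_def
    by (intro antimonoI add_mono real_sqrt_le_mono) (auto simp: antimonoD frac_le)
  have sqrt_D: "(\<lambda>m. sqrt (D m)) \<longlonglongrightarrow> 0" using tendsto_real_sqrt[OF \<open>D \<longlonglongrightarrow> 0\<close>] by simp
  have "(\<lambda>m. 1 / (real m + 1)) \<longlonglongrightarrow> 0"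
    using LIMSEQ_Suc[OF lim_const_over_n[of 1]] by (simp add: add.commute)
  from tendsto_add[OF sqrt_D this] have "\<delta> \<longlonglongrightarrow> 0" by (simp add: \<delta>_def[abs_def])
  moreover have "(\<lambda>m. C m / \<delta> m) \<longlonglongrightarrow> 0"
  proof (rule tendsto_sandwich[OF _ _ tendsto_const sqrt_D])
    have "C m \<le> sqrt (D m) * \<delta> m" for m
    proof -
      have "C m \<le> sqrt (D m) * sqrt (D m)" using CD[of m] D0[of m] by simp
      also have "\<dots> \<le> sqrt (D m) * \<delta> m" unfolding \<delta>_def using D0[of m] by (intro mult_left_mono) auto
      finally show ?thesis .
    qed
    then show "\<forall>\<^sub>F m in sequentially. C m / \<delta> m \<le> sqrt (D m)"
      using \<delta>_pos by (simp add: divide_le_eq)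
  qed (use nonneg \<delta>_pos in \<open>simp add: less_imp_le\<close>)
  ultimately show thesis using that \<open>antimono \<delta>\<close> \<delta>_pos by blast
qed

lemma zero_density_exceptional_set_of_cesaro:
  fixes a :: "nat \<Rightarrow> real"
  assumes a: "\<And>n. 0 \<le> a n" and ces: "(\<lambda>m. (\<Sum>n<m. a n) / real m) \<longlonglongrightarrow> 0"
  obtains N where "zero_density N" "(a \<longlongrightarrow> 0) (sequentially \<sqinter> principal (- N))"
proof -
  have "0 \<le> (\<Sum>n<m. a n) / real m" for m using a by (simp add: sum_nonneg)
  then obtain \<delta> where \<delta>: "antimono \<delta>" "\<And>m. 0 < \<delta> m" "\<delta> \<longlonglongrightarrow> 0"
    and slow: "(\<lambda>m. (\<Sum>n<m. a n) / real m / \<delta> m) \<longlonglongrightarrow> 0"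
    using exists_slower_null_seq[OF _ ces] by blast
  define N where "N = {n. \<delta> n \<le> a n}"
  have "real (card (N \<inter> {..<m})) / real m \<le> (\<Sum>n<m. a n) / real m / \<delta> m" for m
  proof -
    have "real (card (N \<inter> {..<m})) * \<delta> m = (\<Sum>n\<in>N \<inter> {..<m}. \<delta> m)" by simp
    also have "\<dots> \<le> (\<Sum>n\<in>N \<inter> {..<m}. a n)"
    proof (rule sum_mono)
      fix n assume "n \<in> N \<inter> {..<m}"
      then show "\<delta> m \<le> a n" using antimonoD[OF \<delta>(1), of n m] by (simp add: N_def)
    qed
    also have "\<dots> \<le> (\<Sum>n<m. a n)" using a by (intro sum_mono2) auto
    finally have "real (card (N \<inter> {..<m})) \<le> (\<Sum>n<m. a n) / \<delta> m"
      using \<delta>(2)[of m] by (simp add: le_divide_eq)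
    then have "real (card (N \<inter> {..<m})) / real m \<le> (\<Sum>n<m. a n) / \<delta> m / real m"
      by (rule divide_right_mono) simp
    then show ?thesis by (simp add: mult.commute)
  qed
  then have "zero_density N"
    unfolding zero_density_def
    by (intro tendsto_sandwich[OF _ _ tendsto_const slow] always_eventually allI) simp_all
  moreover have "(a \<longlongrightarrow> 0) (sequentially \<sqinter> principal (- N))"
  proof (rule tendstoI)
    fix \<epsilon> :: real assume "\<epsilon> > 0"
    from tendstoD[OF \<delta>(3) this] have "\<forall>\<^sub>F n in sequentially. \<delta> n < \<epsilon>"
      using \<delta>(2) by (simp add: dist_real_def abs_of_pos)
    then show "\<forall>\<^sub>F n in sequentially \<sqinter> principal (- N). dist (a n) 0 < \<epsilon>"
      unfolding eventually_inf_principal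
    proof (rule eventually_mono)
      fix n assume "\<delta> n < \<epsilon>"
      then show "n \<in> - N \<longrightarrow> dist (a n) 0 < \<epsilon>" using a[of n] by (simp add: N_def dist_real_def)
    qed
  qed
  ultimately show thesis using that by blast
qed

section \<open>Visit frequencies along orbits\<close>

lemma le_of_forall_nat_mult_le:
  fixes x y L :: real
  assumes "\<And>m::nat. real m * x \<le> (real m + L) * y"
  shows "x \<le> y"
proof (rule ccontr)
  assume "\<not> x \<le> y"
  then have pos: "x - y > 0" by simp
  obtain m :: nat where "L * y / (x - y) < real m" using reals_Archimedean2 by blast
  with pos have "L * y < real m * (x - y)" by (simp add: divide_less_eq mult.commute)
  with assms[of m] show False by (simp add: algebra_simps)
qed

lemma orbit_sum_le_of_blocks:
  fixes a c :: "'a \<Rightarrow> real" and T :: "'a \<Rightarrow> 'a" and L :: nat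
  assumes S_inv: "\<And>x. x \<in> S \<Longrightarrow> T x \<in> S"
    and a_nonneg: "\<And>x. 0 \<le> a x"
    and c_nonneg: "\<And>x. x \<in> S \<Longrightarrow> 0 \<le> c x"
    and c_inv: "\<And>x. x \<in> S \<Longrightarrow> c (T x) = c x"
    and block: "\<And>x. x \<in> S \<Longrightarrow> \<exists>n\<in>{1..L}. (\<Sum>k<n. a ((T^^k) x)) \<le> real n * c x"
  shows "x \<in> S \<Longrightarrow> (\<Sum>k<m. a ((T^^k) x)) \<le> (real m + real L) * c x"
proof (induction m arbitrary: x rule: less_induct)
  case (less m)
  have orbit: "(T^^j) x \<in> S \<and> c ((T^^j) x) = c x" for j
    by (induction j) (use less.prems S_inv c_inv in auto)
  from block[OF less.prems] obtain n where n: "1 \<le> n" "n \<le> L"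
    and sum_n: "(\<Sum>k<n. a ((T^^k) x)) \<le> real n * c x" by auto
  show ?case
  proof (cases "m < n")
    case True
    have "(\<Sum>k<m. a ((T^^k) x)) \<le> (\<Sum>k<n. a ((T^^k) x))"
      using True a_nonneg by (intro sum_mono2) auto
    also have "\<dots> \<le> real n * c x" by (rule sum_n)
    also have "\<dots> \<le> (real m + real L) * c x"
      using n c_nonneg[OF less.prems] by (intro mult_right_mono) simp_all
    finally show ?thesis .
  next
    case False
    define y where "y = (T^^n) x"
    have shift: "(T^^(n + k)) x = (T^^k) y" for k
      by (metis add.commute comp_apply funpow_add y_def)
    have split: "(\<Sum>k<n + d. a ((T^^k) x)) = (\<Sum>k<n. a ((T^^k) x)) + (\<Sum>k<d. a ((T^^k) y))" for d
      by (induction d) (simp_all add: shift)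
    have "(\<Sum>k<m. a ((T^^k) x)) = (\<Sum>k<n. a ((T^^k) x)) + (\<Sum>k<m - n. a ((T^^k) y))"
      using False split[of "m - n"] by simp
    also have "\<dots> \<le> real n * c x + (real (m - n) + real L) * c y"
      using sum_n less.IH[of "m - n" y] n False orbit[of n] by (intro add_mono) (simp_all add: y_def)
    also have "\<dots> = (real m + real L) * c x"
      using False orbit[of n] by (simp add: y_def of_nat_diff algebra_simps)
    finally show ?thesis .
  qed
qed

definition visit_avg :: "('a \<Rightarrow> 'a) \<Rightarrow> 'a set \<Rightarrow> nat \<Rightarrow> 'a \<Rightarrow> real" where
  "visit_avg T B n x = (\<Sum>k<n. indicator B ((T^^k) x)) / real n"

definition lower_visit_freq :: "('a \<Rightarrow> 'a) \<Rightarrow> 'a set \<Rightarrow> 'a \<Rightarrow> real" where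
  "lower_visit_freq T B x = real_of_ereal (liminf (\<lambda>n. ereal (visit_avg T B n x)))"

lemma visit_avg_nonneg: "0 \<le> visit_avg T B n x"
  unfolding visit_avg_def by (simp add: sum_nonneg)

lemma visit_avg_le_1: "visit_avg T B n x \<le> 1"
proof -
  have "(\<Sum>k<n. indicator B ((T^^k) x) :: real) \<le> (\<Sum>k<n. 1)"
    by (intro sum_mono) (simp add: indicator_def)
  then show ?thesis unfolding visit_avg_def by (cases "n = 0") (auto simp: divide_le_eq)
qed

lemma liminf_visit_avg: "liminf (\<lambda>n. ereal (visit_avg T B n x)) = ereal (lower_visit_freq T B x)"
proof -
  have "0 \<le> liminf (\<lambda>n. ereal (visit_avg T B n x))"
    by (rule Liminf_bounded) (simp add: visit_avg_nonneg)
  moreover have "liminf (\<lambda>n. ereal (visit_avg T B n x)) \<le> 1"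
    by (rule Liminf_le) (auto simp: visit_avg_le_1)
  ultimately show ?thesis unfolding lower_visit_freq_def by (cases "liminf (\<lambda>n. ereal (visit_avg T B n x))") auto
qed

lemma liminf_ennreal_visit_avg:
  "liminf (\<lambda>n. ennreal (visit_avg T B n x)) = ennreal (lower_visit_freq T B x)"
proof -
  have "liminf (\<lambda>n. e2ennreal (ereal (visit_avg T B n x))) = e2ennreal (liminf (\<lambda>n. ereal (visit_avg T B n x)))"
    by (rule Liminf_compose_continuous_mono[OF continuous_on_e2ennreal _ sequentially_bot])
       (simp add: mono_def e2ennreal_mono)
  then show ?thesis by (simp add: liminf_visit_avg)
qed

lemma lower_visit_freq_nonneg: "0 \<le> lower_visit_freq T B x"
  and lower_visit_freq_le_1: "lower_visit_freq T B x \<le> 1"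
proof -
  have "0 \<le> liminf (\<lambda>n. ereal (visit_avg T B n x))"
    by (rule Liminf_bounded) (simp add: visit_avg_nonneg)
  moreover have "liminf (\<lambda>n. ereal (visit_avg T B n x)) \<le> 1"
    by (rule Liminf_le) (auto simp: visit_avg_le_1)
  ultimately show "0 \<le> lower_visit_freq T B x" "lower_visit_freq T B x \<le> 1"
    unfolding liminf_visit_avg by simp_all
qed

lemma visit_avg_shift:
  "visit_avg T B n (T x) = visit_avg T B n x + (indicator B ((T^^n) x) - indicator B x) / real n"
proof -
  let ?f = "\<lambda>k. indicator B ((T^^k) x) :: real"
  have "(\<Sum>k<n. indicator B ((T^^k) (T x)) :: real) = (\<Sum>k<n. ?f (Suc k))"
    by (simp add: funpow_swap1)
  also have "\<dots> = (\<Sum>k<n. ?f k) + ?f n - ?f 0"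
    using sum.lessThan_Suc_shift[of ?f n] sum.lessThan_Suc[of ?f n] by simp
  finally show ?thesis unfolding visit_avg_def by (simp add: add_divide_distrib diff_divide_distrib)
qed

lemma lower_visit_freq_invariant: "lower_visit_freq T B (T x) = lower_visit_freq T B x"
proof -
  define u where "u n = ereal ((indicator B ((T^^n) x) - indicator B x) / real n)" for n
  have "(\<lambda>n. (indicator B ((T^^n) x) - indicator B x) / real n :: real) \<longlonglongrightarrow> 0"
    by (rule Lim_null_comparison[OF _ lim_const_over_n[of 1]])
       (auto intro!: always_eventually simp: indicator_def divide_le_eq)
  then have "u \<longlonglongrightarrow> 0" unfolding u_def zero_ereal_def by simp
  have "liminf (\<lambda>n. ereal (visit_avg T B n (T x))) = liminf (\<lambda>n. u n + ereal (visit_avg T B n x))"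
    by (simp add: visit_avg_shift u_def add.commute)
  also have "\<dots> = liminf (\<lambda>n. ereal (visit_avg T B n x))"
    using ereal_liminf_lim_add[OF \<open>u \<longlonglongrightarrow> 0\<close>] by simp
  finally show ?thesis by (simp add: liminf_visit_avg)
qed

lemma exists_visit_avg_less:
  assumes "\<epsilon> > 0"
  shows "\<exists>n\<ge>1. visit_avg T B n x < lower_visit_freq T B x + \<epsilon>"
proof (rule ccontr)
  assume "\<not> ?thesis"
  then have "\<forall>\<^sub>F n in sequentially. ereal (lower_visit_freq T B x + \<epsilon>) \<le> ereal (visit_avg T B n x)"
    unfolding eventually_sequentially by (auto simp: not_less)
  then have "ereal (lower_visit_freq T B x + \<epsilon>) \<le> ereal (lower_visit_freq T B x)"
    using Liminf_bounded[of _ _ sequentially] liminf_visit_avg by metis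
  with assms show False by simp
qed

section \<open>Measure-preserving systems\<close>

locale mp_system = prob_space M for M :: "'a measure" +
  fixes T :: "'a \<Rightarrow> 'a"
  assumes measurable_T: "T \<in> M \<rightarrow>\<^sub>M M"
    and measure_vimage: "A \<in> sets M \<Longrightarrow> measure M (T -` A \<inter> space M) = measure M A"
begin

lemma measurable_funpow [measurable]: "T^^n \<in> M \<rightarrow>\<^sub>M M"
  by (induction n) (auto intro: measurable_compose[OF _ measurable_T])

lemma funpow_in_space: "x \<in> space M \<Longrightarrow> (T^^n) x \<in> space M"
  by (rule measurable_space[OF measurable_funpow])

lemma sets_preimg_iter [measurable]: "B \<in> sets M \<Longrightarrow> preimg_iter M T n B \<in> sets M"
  unfolding preimg_iter_def by (rule measurable_sets[OF measurable_funpow])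

lemma preimg_iter_Suc: "preimg_iter M T (Suc n) B = preimg_iter M T n (T -` B \<inter> space M)"
  unfolding preimg_iter_def using funpow_in_space by (auto simp: funpow_Suc_right)

lemma preimg_iter_add: "preimg_iter M T n (preimg_iter M T m B) = preimg_iter M T (n + m) B"
  unfolding preimg_iter_def using funpow_in_space
  by (auto simp: funpow_add add.commute[of n m])

lemma preimg_iter_invariant:
  assumes "T -` A \<inter> space M = A" shows "preimg_iter M T n A = A"
proof (induction n)
  case 0
  with assms show ?case by (auto simp: preimg_iter_def)
next
  case (Suc n)
  with assms show ?case by (simp add: preimg_iter_Suc)
qed

lemma measure_preimg_iter: "B \<in> sets M \<Longrightarrow> measure M (preimg_iter M T n B) = measure M B"
proof (induction n arbitrary: B)
  case 0
  then show ?case by (simp add: preimg_iter_def Int_absorb2 sets.sets_into_space)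
next
  case (Suc n)
  have "T -` B \<inter> space M \<in> sets M" by (rule measurable_sets[OF measurable_T Suc.prems])
  with Suc show ?case by (simp add: preimg_iter_Suc measure_vimage)
qed

definition overlap :: "'a set \<Rightarrow> 'a set \<Rightarrow> nat \<Rightarrow> real" where
  "overlap A B n = measure M (A \<inter> preimg_iter M T n B)"

lemma ratio_seq_eq: "ratio_seq M T A B = (\<lambda>n. ereal (overlap A B n / measure M B))"
  by (simp add: fun_eq_iff ratio_seq_def overlap_def)

lemma overlap_le: "B \<in> sets M \<Longrightarrow> overlap A B n \<le> measure M B"
  unfolding overlap_def by (metis finite_measure_mono inf_le2 measure_preimg_iter sets_preimg_iter)

lemma overlap_compl:
  assumes "A \<in> sets M" "B \<in> sets M"
  shows "overlap A B n + overlap (space M - A) B n = measure M B"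
proof -
  have "preimg_iter M T n B = (A \<inter> preimg_iter M T n B) \<union> ((space M - A) \<inter> preimg_iter M T n B)"
    by (auto simp: preimg_iter_def)
  also have "measure M \<dots> = overlap A B n + overlap (space M - A) B n"
    unfolding overlap_def using assms by (intro finite_measure_Union) auto
  finally have "measure M (preimg_iter M T n B) = overlap A B n + overlap (space M - A) B n" .
  with assms show ?thesis by (simp add: measure_preimg_iter)
qed

lemma overlap_null: "B \<in> sets M \<Longrightarrow> measure M B = 0 \<Longrightarrow> overlap A B n = 0"
  using overlap_le[of B A n] by (simp add: overlap_def measure_le_0_iff)

lemma overlap_tendsto_of_Limsup_ratio:
  assumes A: "A \<in> sets M" and B: "B \<in> sets M" "measure M B > 0"
    and "Limsup F (ratio_seq M T A B) \<le> ereal (measure M A)"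
    and "Limsup F (ratio_seq M T (space M - A) B) \<le> ereal (measure M (space M - A))"
  shows "(overlap A B \<longlongrightarrow> measure M A * measure M B) F"
proof -
  have "((\<lambda>n. overlap A B n / measure M B) \<longlongrightarrow> measure M A) F"
  proof (rule tendsto_of_complementary_Limsup)
    show "overlap A B n / measure M B + overlap (space M - A) B n / measure M B
        = measure M A + measure M (space M - A)" for n
      using overlap_compl[OF A B(1), of n] prob_compl[OF A] B(2) by (simp add: add_divide_distrib[symmetric])
  qed (use assms in \<open>simp_all add: ratio_seq_eq\<close>)
  then have "((\<lambda>n. overlap A B n / measure M B * measure M B) \<longlongrightarrow> measure M A * measure M B) F"
    by (intro tendsto_intros)
  with B(2) show ?thesis by simp
qed

lemma Limsup_ratio_of_overlap_tendsto:
  assumes "measure M B > 0" and "(overlap A B \<longlongrightarrow> measure M A * measure M B) F"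
  shows "Limsup F (ratio_seq M T A B) \<le> ereal (measure M A)"
proof -
  have "((\<lambda>n. overlap A B n / measure M B) \<longlongrightarrow> measure M A * measure M B / measure M B) F"
    using assms by (intro tendsto_intros) auto
  with assms(1) show ?thesis unfolding ratio_seq_eq by (intro Limsup_le_of_tendsto) simp
qed

lemma mixing_iff_Limsup_ratio:
  "mixing M T \<longleftrightarrow> (\<forall>A\<in>sets M. \<forall>B\<in>sets M. measure M B > 0 \<longrightarrow>
      limsup (ratio_seq M T A B) \<le> ereal (measure M A))"
proof safe
  fix A B assume "mixing M T" "A \<in> sets M" "B \<in> sets M" "measure M B > 0"
  then show "limsup (ratio_seq M T A B) \<le> ereal (measure M A)"
    by (intro Limsup_ratio_of_overlap_tendsto) (auto simp: mixing_def overlap_def[abs_def])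
next
  assume h: "\<forall>A\<in>sets M. \<forall>B\<in>sets M. measure M B > 0 \<longrightarrow> limsup (ratio_seq M T A B) \<le> ereal (measure M A)"
  have "(overlap A B \<longlonglongrightarrow> measure M A * measure M B)" if A: "A \<in> sets M" and B: "B \<in> sets M" for A B
  proof (cases "measure M B > 0")
    case True
    with h A B show ?thesis by (intro overlap_tendsto_of_Limsup_ratio) auto
  next
    case False
    with B have B0: "measure M B = 0" using measure_nonneg[of M B] by linarith
    with B have "overlap A B = (\<lambda>n. 0)" by (simp add: fun_eq_iff overlap_null)
    with B0 show ?thesis by simp
  qed
  then show "mixing M T" unfolding mixing_def overlap_def[abs_def] by blast
qed

lemma overlap_deviation_bounds:
  assumes "B \<in> sets M"
  shows "0 \<le> \<bar>overlap A B n - measure M A * measure M B\<bar>"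
    and "\<bar>overlap A B n - measure M A * measure M B\<bar> \<le> 1"
proof -
  have "0 \<le> overlap A B n" "overlap A B n \<le> 1"
    using overlap_le[OF assms, of A n] by (auto simp: overlap_def intro: order_trans)
  moreover have "0 \<le> measure M A * measure M B" "measure M A * measure M B \<le> 1"
    by (simp_all add: mult_le_one)
  ultimately show "\<bar>overlap A B n - measure M A * measure M B\<bar> \<le> 1" by linarith
qed simp

lemma weakly_mixing_iff_Limsup_ratio:
  "weakly_mixing M T \<longleftrightarrow> (\<forall>A\<in>sets M. \<forall>B\<in>sets M. measure M B > 0 \<longrightarrow>
      (\<exists>N. zero_density N \<and>
         Limsup (sequentially \<sqinter> principal (- N)) (ratio_seq M T A B) \<le> ereal (measure M A)))"
proof safe
  fix A B assume wm: "weakly_mixing M T" and A: "A \<in> sets M" and B: "B \<in> sets M" "measure M B > 0"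
  have "(\<lambda>m. (\<Sum>n<m. \<bar>overlap A B n - measure M A * measure M B\<bar>) / real m) \<longlonglongrightarrow> 0"
    unfolding overlap_def using wm A B(1) by (simp add: weakly_mixing_def)
  then obtain N where N: "zero_density N"
    and "((\<lambda>n. \<bar>overlap A B n - measure M A * measure M B\<bar>) \<longlongrightarrow> 0) (sequentially \<sqinter> principal (- N))"
    by (rule zero_density_exceptional_set_of_cesaro[OF overlap_deviation_bounds(1)[OF B(1)]])
  then have "(overlap A B \<longlongrightarrow> measure M A * measure M B) (sequentially \<sqinter> principal (- N))"
    by (simp add: tendsto_rabs_zero_iff LIM_zero_iff)
  with N show "\<exists>N. zero_density N \<and>
      Limsup (sequentially \<sqinter> principal (- N)) (ratio_seq M T A B) \<le> ereal (measure M A)"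
    using Limsup_ratio_of_overlap_tendsto[OF B(2)] by blast
next
  assume h: "\<forall>A\<in>sets M. \<forall>B\<in>sets M. measure M B > 0 \<longrightarrow> (\<exists>N. zero_density N \<and>
      Limsup (sequentially \<sqinter> principal (- N)) (ratio_seq M T A B) \<le> ereal (measure M A))"
  have "(\<lambda>m. (\<Sum>n<m. \<bar>overlap A B n - measure M A * measure M B\<bar>) / real m) \<longlonglongrightarrow> 0"
    if A: "A \<in> sets M" and B: "B \<in> sets M" for A B
  proof (cases "measure M B > 0")
    case True
    from h A B True obtain N1 where N1: "zero_density N1"
      "Limsup (sequentially \<sqinter> principal (- N1)) (ratio_seq M T A B) \<le> ereal (measure M A)"
      by blast
    from h A B True obtain N2 where N2: "zero_density N2"
      "Limsup (sequentially \<sqinter> principal (- N2)) (ratio_seq M T (space M - A) B) \<le> ereal (measure M (space M - A))"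
      using sets.compl_sets[OF A] by blast
    let ?F = "sequentially \<sqinter> principal (- (N1 \<union> N2))"
    have F1: "?F \<le> sequentially \<sqinter> principal (- N1)" and F2: "?F \<le> sequentially \<sqinter> principal (- N2)"
      by (intro inf_mono; auto)+
    have "(overlap A B \<longlongrightarrow> measure M A * measure M B) ?F"
      by (rule overlap_tendsto_of_Limsup_ratio[OF A B True order_trans[OF Limsup_mono_filter[OF F1] N1(2)]
            order_trans[OF Limsup_mono_filter[OF F2] N2(2)]])
    then have "((\<lambda>n. \<bar>overlap A B n - measure M A * measure M B\<bar>) \<longlongrightarrow> 0) ?F"
      by (simp add: tendsto_rabs_zero_iff LIM_zero)
    with zero_density_Un[OF N1(1) N2(1)] show ?thesis
      by (intro cesaro_tendsto_zero_of_zero_density overlap_deviation_bounds[OF B])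
  next
    case False
    with B have "measure M B = 0" using measure_nonneg[of M B] by linarith
    with B show ?thesis by (simp add: overlap_null)
  qed
  then show "weakly_mixing M T" unfolding weakly_mixing_def by (simp add: overlap_def)
qed

lemma ergodic_if_Limsup_ratio:
  assumes h: "\<forall>A\<in>sets M. \<forall>B\<in>sets M. measure M B > 0 \<longrightarrow> (\<exists>N. infinite (- N) \<and>
      Limsup (sequentially \<sqinter> principal (- N)) (ratio_seq M T A B) \<le> ereal (measure M A))"
  shows "ergodic M T"
  unfolding ergodic_def
proof safe
  fix A assume A: "A \<in> sets M" and inv: "T -` A \<inter> space M = A" and "measure M A \<noteq> 1"
  then have "measure M A < 1" using prob_le_1[of A] by linarith
  show "measure M A = 0"
  proof (rule ccontr)
    assume "measure M A \<noteq> 0"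
    then have "measure M A > 0" using measure_nonneg[of M A] by linarith
    with h A obtain N where "infinite (- N)"
      and le: "Limsup (sequentially \<sqinter> principal (- N)) (ratio_seq M T A A) \<le> ereal (measure M A)"
      by blast
    have "ratio_seq M T A A = (\<lambda>n. 1)"
      using \<open>measure M A > 0\<close> preimg_iter_invariant[OF inv]
      by (simp add: fun_eq_iff ratio_seq_def one_ereal_def)
    with le Limsup_const[OF sequentially_inf_principal_ne_bot[OF \<open>infinite (- N)\<close>], where c = "1::ereal"]
    have "1 \<le> ereal (measure M A)" by simp
    with \<open>measure M A < 1\<close> show False by simp
  qed
qed

section \<open>Ergodicity and visit frequencies\<close>

lemma measurable_visit_avg [measurable]:
  assumes "B \<in> sets M" shows "visit_avg T B n \<in> borel_measurable M"
proof -
  have "(\<lambda>x. indicator B ((T^^k) x) :: real) \<in> borel_measurable M" for k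
    using assms by (intro measurable_compose[OF measurable_funpow borel_measurable_indicator])
  then show ?thesis
    unfolding visit_avg_def[abs_def] by (intro borel_measurable_divide borel_measurable_sum) auto
qed

lemma measurable_lower_visit_freq [measurable]:
  "B \<in> sets M \<Longrightarrow> lower_visit_freq T B \<in> borel_measurable M"
  unfolding lower_visit_freq_def[abs_def] by measurable

lemma integrable_lower_visit_freq: "B \<in> sets M \<Longrightarrow> integrable M (lower_visit_freq T B)"
  by (intro integrable_const_bound[of _ 1])
     (simp_all add: abs_of_nonneg lower_visit_freq_nonneg lower_visit_freq_le_1)

lemma integrable_indicator_funpow:
  assumes "A \<in> sets M" shows "integrable M (\<lambda>x. indicator A ((T^^k) x) :: real)"
  using assms by (intro integrable_const_bound[of _ 1] measurable_compose[OF measurable_funpow])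
    (auto simp: indicator_def)

lemma integral_indicator_funpow:
  assumes "A \<in> sets M" shows "(\<integral>x. indicator A ((T^^k) x) \<partial>M) = measure M A"
proof -
  have "(\<integral>x. indicator A ((T^^k) x) \<partial>M) = (\<integral>x. indicator (preimg_iter M T k A) x \<partial>M)"
    by (intro Bochner_Integration.integral_cong) (auto simp: preimg_iter_def indicator_def)
  also have "\<dots> = measure M A" using assms by (simp add: measure_preimg_iter)
  finally show ?thesis .
qed

lemma ergodic_AE_integral_le_invariant:
  fixes f :: "'a \<Rightarrow> real"
  assumes erg: "ergodic M T" and f: "integrable M f" and inv: "\<And>x. x \<in> space M \<Longrightarrow> f (T x) = f x"
  shows "AE x in M. integral\<^sup>L M f \<le> f x"
proof -
  let ?I = "integral\<^sup>L M f"
  define L where "L n = {x \<in> space M. f x < ?I - 1 / (real n + 1)}" for n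
  have L_sets: "L n \<in> sets M" for n unfolding L_def using f by measurable
  have "measure M (L n) = 0" for n
  proof (rule ccontr)
    assume "measure M (L n) \<noteq> 0"
    moreover have "T -` L n \<inter> space M = L n" using inv measurable_space[OF measurable_T] by (auto simp: L_def)
    ultimately have "measure M (L n) = 1" using erg L_sets by (auto simp: ergodic_def)
    then have "AE x in M. x \<in> L n" using L_sets by (simp add: prob_eq_1)
    then have "AE x in M. f x \<le> ?I - 1 / (real n + 1)" by eventually_elim (simp add: L_def)
    then have "?I \<le> (\<integral>x. ?I - 1 / (real n + 1) \<partial>M)" using f by (intro integral_mono_AE) auto
    then show False by (simp add: prob_space add_pos_nonneg)
  qed
  then have "(\<Union>n. L n) \<in> null_sets M" using L_sets by (intro null_sets_UN) (simp add: null_sets_def emeasure_eq_measure)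
  moreover have "{x \<in> space M. \<not> ?I \<le> f x} \<subseteq> (\<Union>n. L n)"
  proof safe
    fix x assume "x \<in> space M" "\<not> ?I \<le> f x"
    then obtain n where "inverse (real (Suc n)) < ?I - f x" using reals_Archimedean[of "?I - f x"] by auto
    with \<open>x \<in> space M\<close> show "x \<in> (\<Union>n. L n)"
      by (intro UN_I[of n]) (auto simp: L_def inverse_eq_divide add.commute)
  qed
  ultimately show ?thesis by (rule AE_I')
qed

lemma visit_avg_below_lower_freq_off_small_set:
  assumes B: "B \<in> sets M" and "\<epsilon> > 0"
  obtains L G where "G \<in> sets M" "measure M G < \<epsilon>"
    "\<And>x. x \<in> space M - G \<Longrightarrow> \<exists>n\<in>{1..L}. visit_avg T B n x < lower_visit_freq T B x + \<epsilon>"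
proof -
  define G where "G L = {x \<in> space M. \<forall>n\<in>{1..L}. lower_visit_freq T B x + \<epsilon> \<le> visit_avg T B n x}" for L
  have G_sets: "G L \<in> sets M" for L unfolding G_def using B by measurable
  have "decseq G" by (rule decseq_SucI) (auto simp: G_def)
  have not_in: "x \<notin> G n" if "n \<ge> 1" "visit_avg T B n x < lower_visit_freq T B x + \<epsilon>" for x n
    using that unfolding G_def by (auto simp: not_le intro!: bexI[of _ n])
  have "(\<Inter>L. G L) = {}"
  proof (rule equals0I)
    fix x assume "x \<in> (\<Inter>L. G L)"
    then have "x \<in> G n" for n by simp
    moreover obtain n where "n \<ge> 1" "visit_avg T B n x < lower_visit_freq T B x + \<epsilon>"
      using exists_visit_avg_less[OF \<open>\<epsilon> > 0\<close>, of T B x] by auto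
    ultimately show False using not_in by auto
  qed
  moreover have "(\<lambda>L. measure M (G L)) \<longlonglongrightarrow> measure M (\<Inter>L. G L)"
    using G_sets \<open>decseq G\<close> by (intro Lim_measure_decseq) auto
  ultimately have "(\<lambda>L. measure M (G L)) \<longlonglongrightarrow> 0" by simp
  from order_tendstoD(2)[OF this \<open>\<epsilon> > 0\<close>] obtain L where "measure M (G L) < \<epsilon>"
    by (auto simp: eventually_sequentially)
  moreover have "\<exists>n\<in>{1..L}. visit_avg T B n x < lower_visit_freq T B x + \<epsilon>" if "x \<in> space M - G L" for x
    using that by (auto simp: G_def not_le)
  ultimately show thesis using that G_sets by blast
qed

lemma measure_le_integral_lower_visit_freq:
  assumes B: "B \<in> sets M"
  shows "measure M B \<le> (\<integral>x. lower_visit_freq T B x \<partial>M)"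
proof (rule field_le_epsilon)
  fix e :: real assume "e > 0"
  define \<epsilon> where "\<epsilon> = e / 2"
  have "\<epsilon> > 0" using \<open>e > 0\<close> by (simp add: \<epsilon>_def)
  let ?I = "\<integral>x. lower_visit_freq T B x \<partial>M"
  obtain G L where G: "G \<in> sets M" "measure M G < \<epsilon>"
    and short: "\<And>x. x \<in> space M - G \<Longrightarrow> \<exists>n\<in>{1..L}. visit_avg T B n x < lower_visit_freq T B x + \<epsilon>"
    using visit_avg_below_lower_freq_off_small_set[OF B \<open>\<epsilon> > 0\<close>] by blast
  \<comment> \<open>visits are only counted to \<open>B - G\<close>, so that points of \<open>G\<close> admit the trivial block of length 1\<close>
  define K where "K = max 1 L"
  define a where "a x = (indicator (B - G) x :: real)" for x
  define c where "c x = lower_visit_freq T B x + \<epsilon>" for x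
  have c_nonneg: "0 \<le> c x" for x
    using lower_visit_freq_nonneg[of T B x] \<open>\<epsilon> > 0\<close> by (simp add: c_def)
  have block: "\<exists>n\<in>{1..K}. (\<Sum>k<n. a ((T^^k) x)) \<le> real n * c x" if "x \<in> space M" for x
  proof (cases "x \<in> G")
    case True
    then show ?thesis using c_nonneg[of x] by (intro bexI[of _ 1]) (simp_all add: a_def K_def)
  next
    case False
    with that have "x \<in> space M - G" by simp
    from short[OF this] obtain n where n: "n \<in> {1..L}" "visit_avg T B n x < c x" by (auto simp: c_def)
    have "(\<Sum>k<n. a ((T^^k) x)) \<le> (\<Sum>k<n. indicator B ((T^^k) x))"
      by (intro sum_mono) (simp add: a_def indicator_def)
    also have "\<dots> = real n * visit_avg T B n x" using n by (simp add: visit_avg_def)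
    also have "\<dots> \<le> real n * c x" using n by (intro mult_left_mono) auto
    finally show ?thesis using n by (intro bexI[of _ n]) (auto simp: K_def)
  qed
  have orbit_bound: "(\<Sum>k<m. a ((T^^k) x)) \<le> (real m + real K) * c x" if "x \<in> space M" for m x
    by (rule orbit_sum_le_of_blocks[where S = "space M", OF _ _ c_nonneg _ block that])
       (simp_all add: a_def c_def lower_visit_freq_invariant measurable_space[OF measurable_T])
  have "real m * measure M (B - G) \<le> (real m + real K) * (?I + \<epsilon>)" for m
  proof -
    have a_int: "integrable M (\<lambda>x. a ((T^^k) x))" for k
      unfolding a_def using B G by (intro integrable_indicator_funpow) auto
    have "real m * measure M (B - G) = (\<integral>x. (\<Sum>k<m. a ((T^^k) x)) \<partial>M)"
      using a_int B G by (simp add: a_def integral_indicator_funpow)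
    also have "\<dots> \<le> (\<integral>x. (real m + real K) * c x \<partial>M)"
      using a_int integrable_lower_visit_freq[OF B] orbit_bound by (intro integral_mono) (auto simp: c_def)
    also have "\<dots> = (real m + real K) * (?I + \<epsilon>)"
      using integrable_lower_visit_freq[OF B] by (simp add: c_def prob_space)
    finally show ?thesis .
  qed
  then have "measure M (B - G) \<le> ?I + \<epsilon>" by (rule le_of_forall_nat_mult_le)
  moreover have "measure M B \<le> measure M (B - G) + measure M G"
  proof -
    have "measure M B \<le> measure M ((B - G) \<union> G)" using B G by (intro finite_measure_mono) auto
    also have "\<dots> \<le> measure M (B - G) + measure M G" using B G by (intro measure_Un_le) auto
    finally show ?thesis .
  qed
  ultimately show "measure M B \<le> ?I + e" using G(2) by (simp add: \<epsilon>_def)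
qed

lemma integral_indicator_times_visit_avg:
  assumes A: "A \<in> sets M" and B: "B \<in> sets M"
  shows "(\<integral>x. indicator A x * visit_avg T B n x \<partial>M) = (\<Sum>k<n. overlap A B k) / real n"
proof -
  have "(\<integral>x. indicator A x * visit_avg T B n x \<partial>M)
      = (\<integral>x. (\<Sum>k<n. indicator (A \<inter> preimg_iter M T k B) x) / real n \<partial>M)"
    by (intro Bochner_Integration.integral_cong)
       (auto simp: visit_avg_def preimg_iter_def indicator_def sum_distrib_left)
  also have "\<dots> = (\<Sum>k<n. overlap A B k) / real n"
  proof -
    have "(\<integral>x. (\<Sum>k<n. indicator (A \<inter> preimg_iter M T k B) x) \<partial>M)
        = (\<Sum>k<n. \<integral>x. indicator (A \<inter> preimg_iter M T k B) x \<partial>M :: real)"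
      using A B by (intro Bochner_Integration.integral_sum integrable_real_indicator)
        (auto simp: less_top[symmetric])
    then show ?thesis using A B by (simp add: overlap_def)
  qed
  finally show ?thesis .
qed

lemma set_integral_lower_visit_freq_le:
  assumes A: "A \<in> sets M" and B: "B \<in> sets M" and bound: "\<And>k. overlap A B k \<le> b"
  shows "(\<integral>x. indicator A x * lower_visit_freq T B x \<partial>M) \<le> b"
proof -
  have "0 \<le> b" using bound[of 0] by (simp add: overlap_def order_trans[OF measure_nonneg])
  define u where "u n x = ennreal (indicator A x * visit_avg T B n x)" for n x
  have int: "integrable M (\<lambda>x. indicator A x * f x)"
    if "f \<in> borel_measurable M" "\<And>x. 0 \<le> f x" "\<And>x. f x \<le> 1" for f :: "'a \<Rightarrow> real"
    using that A by (intro integrable_const_bound[of _ 1]) (auto simp: indicator_def)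
  have "liminf (\<lambda>n. u n x) = ennreal (indicator A x * lower_visit_freq T B x)" for x
    by (cases "x \<in> A") (simp_all add: u_def liminf_ennreal_visit_avg Liminf_const)
  then have "ennreal (\<integral>x. indicator A x * lower_visit_freq T B x \<partial>M) = (\<integral>\<^sup>+x. liminf (\<lambda>n. u n x) \<partial>M)"
    using int[of "lower_visit_freq T B"] B
    by (simp add: nn_integral_eq_integral lower_visit_freq_nonneg lower_visit_freq_le_1)
  also have "\<dots> \<le> liminf (\<lambda>n. \<integral>\<^sup>+x. u n x \<partial>M)"
    using A B by (intro nn_integral_liminf) (simp add: u_def)
  also have "\<dots> \<le> ennreal b"
  proof (rule Liminf_le)
    have "(\<integral>\<^sup>+x. u n x \<partial>M) = ennreal ((\<Sum>k<n. overlap A B k) / real n)" for n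
      using int[of "visit_avg T B n"] A B unfolding u_def
      by (simp add: nn_integral_eq_integral visit_avg_nonneg visit_avg_le_1 integral_indicator_times_visit_avg)
    moreover have "(\<Sum>k<n. overlap A B k) / real n \<le> b" if "n \<ge> 1" for n
      using sum_mono[of "{..<n}" "overlap A B" "\<lambda>_. b"] bound that by (simp add: divide_le_eq mult.commute)
    ultimately show "\<forall>\<^sub>F n in sequentially. (\<integral>\<^sup>+x. u n x \<partial>M) \<le> ennreal b"
      unfolding eventually_sequentially by (auto intro: ennreal_leI)
  qed simp
  finally show ?thesis using \<open>0 \<le> b\<close> by simp
qed

lemma ergodic_imp_liminf_ratio_le:
  assumes erg: "ergodic M T" and A: "A \<in> sets M" and B: "B \<in> sets M" "measure M B > 0"
  shows "liminf (ratio_seq M T A B) \<le> ereal (measure M A)"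
proof (rule ccontr)
  assume "\<not> ?thesis"
  then obtain c where c: "measure M A < c" "ereal c < liminf (ratio_seq M T A B)"
    using ereal_dense2[of "ereal (measure M A)"] by (auto simp: not_le)
  from less_LiminfD[OF c(2)] obtain n0 where n0: "\<And>n. n \<ge> n0 \<Longrightarrow> c * measure M B < overlap A B n"
    using B(2) by (auto simp: eventually_sequentially ratio_seq_eq less_divide_eq)
  \<comment> \<open>shifting \<open>B\<close> by \<open>n0\<close> makes the bound below hold for every \<open>k\<close>\<close>
  define B' where "B' = preimg_iter M T n0 B"
  define A' where "A' = space M - A"
  have B': "B' \<in> sets M" "measure M B' = measure M B"
    using B by (simp_all add: B'_def measure_preimg_iter)
  have A': "A' \<in> sets M" "measure M A' = 1 - measure M A"
    using A by (simp_all add: A'_def prob_compl)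
  have "overlap A' B' k \<le> (1 - c) * measure M B" for k
  proof -
    have "overlap A B' k = overlap A B (k + n0)" by (simp add: overlap_def B'_def preimg_iter_add)
    with overlap_compl[OF A B'(1), of k] n0[of "k + n0"] B'(2) show ?thesis
      by (simp add: A'_def algebra_simps)
  qed
  then have upper: "(\<integral>x. indicator A' x * lower_visit_freq T B' x \<partial>M) \<le> (1 - c) * measure M B"
    by (rule set_integral_lower_visit_freq_le[OF A'(1) B'(1)])
  let ?\<gamma> = "\<integral>x. lower_visit_freq T B' x \<partial>M"
  have "AE x in M. ?\<gamma> \<le> lower_visit_freq T B' x"
    using integrable_lower_visit_freq[OF B'(1)]
    by (intro ergodic_AE_integral_le_invariant[OF erg]) (simp_all add: lower_visit_freq_invariant)
  then have "(\<integral>x. indicator A' x * ?\<gamma> \<partial>M) \<le> (\<integral>x. indicator A' x * lower_visit_freq T B' x \<partial>M)"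
    using integrable_mult_indicator[OF A'(1) integrable_lower_visit_freq[OF B'(1)]]
      integrable_mult_indicator[OF A'(1) integrable_const[of ?\<gamma>]]
    by (intro integral_mono_AE) (auto elim!: eventually_mono simp: indicator_def)
  moreover have "measure M B * measure M A' \<le> (\<integral>x. indicator A' x * ?\<gamma> \<partial>M)"
    using A'(1) measure_le_integral_lower_visit_freq[OF B'(1)] B'(2)
    by (simp add: mult.commute mult_left_mono)
  ultimately have "measure M B * (1 - measure M A) \<le> measure M B * (1 - c)"
    using upper A'(2) by (simp add: mult.commute)
  with B(2) c(1) show False by simp
qed

lemma ergodic_iff_liminf_ratio:
  "ergodic M T \<longleftrightarrow> (\<forall>A\<in>sets M. \<forall>B\<in>sets M. measure M B > 0 \<longrightarrow>
      liminf (ratio_seq M T A B) \<le> ereal (measure M A))" (is "_ \<longleftrightarrow> ?L")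
  and ergodic_iff_Limsup_ratio:
  "ergodic M T \<longleftrightarrow> (\<forall>A\<in>sets M. \<forall>B\<in>sets M. measure M B > 0 \<longrightarrow> (\<exists>N. infinite (- N) \<and>
      Limsup (sequentially \<sqinter> principal (- N)) (ratio_seq M T A B) \<le> ereal (measure M A)))" (is "_ \<longleftrightarrow> ?S")
proof -
  have "?S" if "?L"
  proof (intro ballI impI)
    fix A B assume "A \<in> sets M" "B \<in> sets M" "measure M B > 0"
    with that have "liminf (ratio_seq M T A B) \<le> ereal (measure M A)" by blast
    moreover obtain N where "infinite (- N)"
      "Limsup (sequentially \<sqinter> principal (- N)) (ratio_seq M T A B) \<le> liminf (ratio_seq M T A B)"
      using exists_Limsup_along_infinite_le_liminf by blast
    ultimately show "\<exists>N. infinite (- N) \<and>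
        Limsup (sequentially \<sqinter> principal (- N)) (ratio_seq M T A B) \<le> ereal (measure M A)"
      by (blast intro: order_trans)
  qed
  moreover have "ergodic M T \<Longrightarrow> ?L" by (intro ballI impI ergodic_imp_liminf_ratio_le)
  ultimately show "ergodic M T \<longleftrightarrow> ?L" "ergodic M T \<longleftrightarrow> ?S"
    using ergodic_if_Limsup_ratio by blast+
qed

end

theorem mainTheorem17:
  fixes M :: "'a measure" and T :: "'a \<Rightarrow> 'a"
  assumes "mps M T"
  shows "(mixing M T \<longleftrightarrow>
           (\<forall>A\<in>sets M. \<forall>B\<in>sets M. measure M B > 0 \<longrightarrow>
              limsup (ratio_seq M T A B) \<le> ereal (measure M A)))
       \<and> (weakly_mixing M T \<longleftrightarrow>
           (\<forall>A\<in>sets M. \<forall>B\<in>sets M. measure M B > 0 \<longrightarrow>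
              (\<exists>N::nat set. zero_density N \<and>
                 Limsup (sequentially \<sqinter> principal (- N)) (ratio_seq M T A B) \<le> ereal (measure M A))))
       \<and> (ergodic M T \<longleftrightarrow>
           (\<forall>A\<in>sets M. \<forall>B\<in>sets M. measure M B > 0 \<longrightarrow>
              (\<exists>N::nat set. infinite (- N) \<and>
                 Limsup (sequentially \<sqinter> principal (- N)) (ratio_seq M T A B) \<le> ereal (measure M A))))
       \<and> (ergodic M T \<longleftrightarrow>
           (\<forall>A\<in>sets M. \<forall>B\<in>sets M. measure M B > 0 \<longrightarrow>
              liminf (ratio_seq M T A B) \<le> ereal (measure M A)))"
proof -
  interpret mp_system M T
    using assms unfolding mps_def mp_system_def mp_system_axioms_def by auto
  show ?thesis
    by (intro conjI mixing_iff_Limsup_ratio weakly_mixing_iff_Limsup_ratio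
        ergodic_iff_Limsup_ratio ergodic_iff_liminf_ratio)
qed

end
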